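(* Let $0<k_1<k_2$, $d>0$, and assume $2d\sqrt{k_2^2-k_1^2}\neq n\pi$ for every positive integer $n$. Consider the equation $W(\xi,\delta)=0$ for $\xi\in\mathbb{R}$ and $\delta\ge0$ (where $\delta=0$ means $\delta=0^+$). Its solutions are finitely many points $\{\pm\xi_n:\ n=1,\dots,N\}$, all occurring with $\delta=0^+$, each a simple zero of $\xi\mapsto W(\xi,0^+)$, and satisfying $k_1<|\xi_n|<k_2$; there are no other solutions. Moreover $N\ge1$, i.e. there is at least one nontrivial solution of $W(\xi,0^+)=0$.
   Context: Let $q(x)=(k_2^2-k_1^2)\chi_{[-d,d]}(x)$. The square root $\sqrt{z}$ is the principal branch on $\mathbb{C}\setminus(-\infty,0]$, positive on $(0,\infty)$. For $\xi\in\mathbb{R}$, $\delta>0$, let $u_\pm(\xi,\delta;\cdot)$ be the solutions of $u''+(k_1^2+q(x)-\xi^2+i\delta)u=0$ (with $u,u'$ continuous) determined by $u_\pm(\xi,\delta;x)=e^{\pm ix\sqrt{k_1^2-\xi^2+i\delta}}$ for $\pm x>d$; $u_\pm(\xi,0^+;\cdot)$ denotes the limit as $\delta\to0^+$ (so $\sqrt{k_1^2-\xi^2}$ is replaced by $i\sqrt{\xi^2-k_1^2}$ when $|\xi|>k_1$). The Wronskian is $W(\xi,\delta)=u_-\partial_xu_+-u_+\partial_xu_-$ (independent of $x$), and $W(\xi,0^+)=\lim_{\delta\to0^+}W(\xi,\delta)$. *)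

theory Defs
  imports "HOL-Analysis.Analysis"
begin

definition qpot :: "real \<Rightarrow> real \<Rightarrow> real \<Rightarrow> real \<Rightarrow> real" where
  "qpot k1 k2 d x = (k2\<^sup>2 - k1\<^sup>2) * indicator {-d..d} x"

definition is_sol :: "real \<Rightarrow> real \<Rightarrow> real \<Rightarrow> real \<Rightarrow> real \<Rightarrow> (real \<Rightarrow> complex) \<Rightarrow> bool" where
  "is_sol k1 k2 d xi delta u \<longleftrightarrow>
     (\<exists>u'. (\<forall>x. (u has_vector_derivative u' x) (at x)) \<and> continuous_on UNIV u' \<and>
        (\<forall>x. x \<noteq> d \<and> x \<noteq> -d \<longrightarrow>
           (u' has_vector_derivative
              (- (complex_of_real (k1\<^sup>2 + qpot k1 k2 d x - xi\<^sup>2) + \<i> * complex_of_real delta) * u x)) (at x)))"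

definition kz :: "real \<Rightarrow> real \<Rightarrow> real \<Rightarrow> complex" where
  "kz k1 xi delta = csqrt (complex_of_real (k1\<^sup>2 - xi\<^sup>2) + \<i> * complex_of_real delta)"

definition u_plus :: "real \<Rightarrow> real \<Rightarrow> real \<Rightarrow> real \<Rightarrow> real \<Rightarrow> real \<Rightarrow> complex" where
  "u_plus k1 k2 d xi delta = (THE u. is_sol k1 k2 d xi delta u \<and>
      (\<forall>x. x > d \<longrightarrow> u x = exp (\<i> * complex_of_real x * kz k1 xi delta)))"

definition u_minus :: "real \<Rightarrow> real \<Rightarrow> real \<Rightarrow> real \<Rightarrow> real \<Rightarrow> real \<Rightarrow> complex" where
  "u_minus k1 k2 d xi delta = (THE u. is_sol k1 k2 d xi delta u \<and>
      (\<forall>x. x < -d \<longrightarrow> u x = exp (- \<i> * complex_of_real x * kz k1 xi delta)))"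

text \<open>Wronskian W = u_- u_+' - u_+ u_-' (independent of x; evaluated at x = 0).\<close>
definition Wr :: "real \<Rightarrow> real \<Rightarrow> real \<Rightarrow> real \<Rightarrow> real \<Rightarrow> complex" where
  "Wr k1 k2 d xi delta =
     u_minus k1 k2 d xi delta 0 * vector_derivative (u_plus k1 k2 d xi delta) (at 0)
   - u_plus k1 k2 d xi delta 0 * vector_derivative (u_minus k1 k2 d xi delta) (at 0)"

definition W0 :: "real \<Rightarrow> real \<Rightarrow> real \<Rightarrow> real \<Rightarrow> complex" where
  "W0 k1 k2 d xi = Lim (at_right 0) (\<lambda>delta. Wr k1 k2 d xi delta)"

end

theory Submission
  imports Defs
begin

(* For delta > 0 the outgoing solution u_+ is explicit: exp (i k x) for x > d, continued through the
   well by cosines and sines, where k and m are the square roots of k1^2 - xi^2 + i delta and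
   k2^2 - xi^2 + i delta.  It is the only solution with this tail, and u_- is its reflection since q
   is even.  Hence W = 2 u_+(0) u_+'(0) = 2 exp (2 i k d) F1 F2 with F1 = cos (m d) - i k sin (m d) / m
   and F2 = m sin (m d) + i k cos (m d).  For delta > 0 neither factor vanishes, because
   Im (m sin (m d) cnj (cos (m d))) > 0: sinh beats sin.
   The limit delta -> 0+ is the same formula at delta = 0.  It does not vanish for |xi| <= k1 (this is
   where 2 d sqrt (k2^2 - k1^2) is not a multiple of pi is used) nor for |xi| >= k2.  For
   k1 < |xi| < k2, with b = sqrt (k2^2 - xi^2) and g = sqrt (xi^2 - k1^2), it equals
   (k2^2 - k1^2) exp (-2 d g) / b * sin (2 theta) for the Pruefer angle theta = b d - arctan (g / b),
   whose derivative -xi (d + 1/g) / b never vanishes.  So every zero is simple, hence isolated, and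
   there are finitely many; and since theta falls from sqrt (k2^2 - k1^2) d > 0 at xi = k1 to
   negative values near k2, there is at least one. *)

section \<open>Solutions of y'' = - m^2 y glued at break points\<close>

definition glue :: "real \<Rightarrow> (real \<Rightarrow> 'a) \<Rightarrow> (real \<Rightarrow> 'a) \<Rightarrow> real \<Rightarrow> 'a" where
  "glue c f g x = (if x \<le> c then f x else g x)"

lemma glue_left [simp]: "x \<le> c \<Longrightarrow> glue c f g x = f x"
  and glue_right [simp]: "c < x \<Longrightarrow> glue c f g x = g x"
  by (simp_all add: glue_def)

lemma has_vector_derivative_glue:
  fixes f g :: "real \<Rightarrow> 'a::real_normed_vector"
  assumes "\<And>x. (f has_vector_derivative f' x) (at x)" "\<And>x. (g has_vector_derivative g' x) (at x)"
    and "f c = g c" "f' c = g' c"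
  shows "(glue c f g has_vector_derivative glue c f' g' x) (at x)"
proof -
  have "((\<lambda>x. if x \<in> {..c} then f x else g x) has_vector_derivative
      (if x \<in> {..c} then f' x else g' x)) (at x within UNIV)"
    by (rule has_vector_derivative_If_within_closures[where T = "{c<..}"])
      (use assms in \<open>auto intro: has_vector_derivative_at_within\<close>)
  then show ?thesis by (simp add: glue_def[abs_def])
qed

lemma has_vector_derivative_glue_off:
  assumes "x < c \<Longrightarrow> (f has_vector_derivative D) (at x)" "c < x \<Longrightarrow> (g has_vector_derivative D) (at x)"
    and "x \<noteq> c"
  shows "(glue c f g has_vector_derivative D) (at x)"
proof (cases "x < c")
  case True
  show ?thesis
    by (rule has_vector_derivative_transform_within_open[OF assms(1)[OF True], of "{..<c}"])
      (use True in auto)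
next
  case False
  with assms(3) have "c < x" by simp
  show ?thesis
    by (rule has_vector_derivative_transform_within_open[OF assms(2)[OF \<open>c < x\<close>], of "{c<..}"])
      (use \<open>c < x\<close> in auto)
qed

lemma continuous_on_glue:
  assumes "continuous_on UNIV f" "continuous_on UNIV g" "f c = g c"
  shows "continuous_on UNIV (glue c f g)"
  unfolding glue_def[abs_def]
  by (rule continuous_on_cases_le[where h = id, simplified])
    (use assms in \<open>auto intro: continuous_on_subset\<close>)

lemma has_vector_derivative_reflect:
  fixes f :: "real \<Rightarrow> 'a::real_normed_vector"
  assumes "(f has_vector_derivative f') (at (- x))"
  shows "((\<lambda>x. f (- x)) has_vector_derivative - f') (at x)"
proof -
  have "(uminus has_vector_derivative -1) (at x)"
    using has_real_derivative_iff_has_vector_derivative[THEN iffD1, OF DERIV_minus[OF DERIV_ident]]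
    by (simp add: fun_Compl_def)
  from vector_diff_chain_at[OF this assms] show ?thesis by (simp add: o_def)
qed

definition harmonic :: "complex \<Rightarrow> real \<Rightarrow> complex \<Rightarrow> complex \<Rightarrow> real \<Rightarrow> complex" where
  "harmonic m a \<alpha> \<beta> x = \<alpha> * cos (m * of_real (x - a)) + \<beta> * sin (m * of_real (x - a)) / m"

definition harmonic' :: "complex \<Rightarrow> real \<Rightarrow> complex \<Rightarrow> complex \<Rightarrow> real \<Rightarrow> complex" where
  "harmonic' m a \<alpha> \<beta> x = \<beta> * cos (m * of_real (x - a)) - \<alpha> * m * sin (m * of_real (x - a))"

lemma harmonic_initial [simp]: "harmonic m a \<alpha> \<beta> a = \<alpha>" "harmonic' m a \<alpha> \<beta> a = \<beta>"
  by (simp_all add: harmonic_def harmonic'_def)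

lemma has_vector_derivative_harmonic:
  assumes "m \<noteq> 0"
  shows "(harmonic m a \<alpha> \<beta> has_vector_derivative harmonic' m a \<alpha> \<beta> x) (at x)"
proof -
  have "((\<lambda>z. \<alpha> * cos (m * (z - of_real a)) + \<beta> * sin (m * (z - of_real a)) / m)
      has_field_derivative harmonic' m a \<alpha> \<beta> x) (at (of_real x))"
    using assms by (auto intro!: derivative_eq_intros simp: harmonic'_def field_simps)
  then show ?thesis
    using has_vector_derivative_real_field by (force simp: harmonic_def[abs_def])
qed

lemma has_vector_derivative_harmonic':
  "(harmonic' m a \<alpha> \<beta> has_vector_derivative - (m\<^sup>2) * harmonic m a \<alpha> \<beta> x) (at x)"
proof (cases "m = 0")
  case True
  then show ?thesis by (simp add: harmonic'_def[abs_def])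
next
  case False
  have "((\<lambda>z. \<beta> * cos (m * (z - of_real a)) - \<alpha> * m * sin (m * (z - of_real a)))
      has_field_derivative - (m\<^sup>2) * harmonic m a \<alpha> \<beta> x) (at (of_real x))"
    using False by (auto intro!: derivative_eq_intros simp: harmonic_def field_simps power2_eq_square)
  then show ?thesis
    using has_vector_derivative_real_field by (force simp: harmonic'_def[abs_def])
qed

lemma continuous_on_harmonic:
  assumes "m \<noteq> 0"
  shows "continuous_on UNIV (harmonic m a \<alpha> \<beta>)" "continuous_on UNIV (harmonic' m a \<alpha> \<beta>)"
  using has_vector_derivative_continuous[OF has_vector_derivative_harmonic[OF assms]]
    has_vector_derivative_continuous[OF has_vector_derivative_harmonic']
  by (auto intro!: continuous_at_imp_continuous_on)

lemma harmonic_wronskian: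
  assumes "m \<noteq> 0"
  shows "harmonic m a 1 0 x * harmonic' m a 0 1 x - harmonic' m a 1 0 x * harmonic m a 0 1 x = 1"
  using assms sin_cos_squared_add[of "m * of_real (x - a)"]
  by (simp add: harmonic_def harmonic'_def power2_eq_square)

lemma wronskian_constant_on:
  fixes w w' s s' :: "real \<Rightarrow> complex"
  assumes "convex S"
    and w: "\<And>x. x \<in> S \<Longrightarrow> (w has_vector_derivative w' x) (at x)"
      "\<And>x. x \<in> S \<Longrightarrow> (w' has_vector_derivative - c * w x) (at x)"
    and s: "\<And>x. x \<in> S \<Longrightarrow> (s has_vector_derivative s' x) (at x)"
      "\<And>x. x \<in> S \<Longrightarrow> (s' has_vector_derivative - c * s x) (at x)"
    and "x \<in> S" "y \<in> S"
  shows "w x * s' x - w' x * s x = w y * s' y - w' y * s y"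
proof -
  have wronskian_deriv_0:
    "((\<lambda>x. w x * s' x - w' x * s x) has_vector_derivative 0) (at x within S)" if "x \<in> S" for x
  proof -
    have "((\<lambda>x. w x * s' x - w' x * s x) has_vector_derivative
        w x * (- c * s x) + w' x * s' x - (w' x * s' x + - c * w x * s x)) (at x)"
      by (intro has_vector_derivative_diff has_vector_derivative_mult w s that)
    also have "w x * (- c * s x) + w' x * s' x - (w' x * s' x + - c * w x * s x) = 0"
      by (simp add: algebra_simps)
    finally show ?thesis by (rule has_vector_derivative_at_within)
  qed
  show ?thesis
    by (rule has_vector_derivative_zero_constant[OF \<open>convex S\<close> wronskian_deriv_0])
      (use \<open>x \<in> S\<close> \<open>y \<in> S\<close> in auto)
qed

lemma harmonic_ode_zero_on:
  fixes w w' :: "real \<Rightarrow> complex"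
  assumes "m \<noteq> 0" "convex S" "b \<in> closure S"
    and w: "\<And>x. x \<in> S \<Longrightarrow> (w has_vector_derivative w' x) (at x)"
      "\<And>x. x \<in> S \<Longrightarrow> (w' has_vector_derivative - (m\<^sup>2) * w x) (at x)"
    and "continuous_on UNIV w" "continuous_on UNIV w'" "w b = 0" "w' b = 0" "x \<in> S"
  shows "w x = 0 \<and> w' x = 0"
proof -
  have wronskian_0: "w x * harmonic' m b \<alpha> \<beta> x - w' x * harmonic m b \<alpha> \<beta> x = 0" for \<alpha> \<beta>
  proof -
    let ?W = "\<lambda>y. w y * harmonic' m b \<alpha> \<beta> y - w' y * harmonic m b \<alpha> \<beta> y"
    have "continuous_on UNIV ?W"
      using continuous_on_harmonic[OF \<open>m \<noteq> 0\<close>] assms(6,7)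
      by (intro continuous_on_diff continuous_on_mult) auto
    then have "continuous_on (closure S) ?W"
      by (rule continuous_on_subset) simp
    moreover have "?W y = ?W x" if "y \<in> S" for y
      by (rule wronskian_constant_on[OF \<open>convex S\<close> w has_vector_derivative_harmonic[OF \<open>m \<noteq> 0\<close>]
          has_vector_derivative_harmonic' that \<open>x \<in> S\<close>])
    ultimately have "?W b = ?W x"
      by (rule continuous_constant_on_closure[OF _ _ \<open>b \<in> closure S\<close>])
    then show ?thesis using assms(8,9) by simp
  qed
  \<comment> \<open>The two fundamental solutions have Wronskian 1, so w x and w' x solve a regular linear system.\<close>
  let ?c = "harmonic m b 1 0 x" and ?c' = "harmonic' m b 1 0 x"
    and ?s = "harmonic m b 0 1 x" and ?s' = "harmonic' m b 0 1 x"
  have "w x = w x * (?c * ?s' - ?c' * ?s)"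
    by (simp add: harmonic_wronskian[OF \<open>m \<noteq> 0\<close>])
  also have "\<dots> = (w x * ?s' - w' x * ?s) * ?c - (w x * ?c' - w' x * ?c) * ?s"
    by (simp add: algebra_simps)
  also have "\<dots> = 0"
    using wronskian_0[of 1 0] wronskian_0[of 0 1] by simp
  finally have "w x = 0" .
  have "w' x = w' x * (?c * ?s' - ?c' * ?s)"
    by (simp add: harmonic_wronskian[OF \<open>m \<noteq> 0\<close>])
  also have "\<dots> = (w x * ?s' - w' x * ?s) * ?c' - (w x * ?c' - w' x * ?c) * ?s'"
    by (simp add: algebra_simps)
  also have "\<dots> = 0"
    using wronskian_0[of 1 0] wronskian_0[of 0 1] by simp
  finally show ?thesis using \<open>w x = 0\<close> by simp
qed

section \<open>The outgoing solution for delta > 0\<close>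

(* k and m are the wave numbers outside and inside the well [-d, d]. *)
definition jost_mid :: "complex \<Rightarrow> complex \<Rightarrow> real \<Rightarrow> real \<Rightarrow> complex" where
  "jost_mid k m d = harmonic m d (exp (\<i> * of_real d * k)) (\<i> * k * exp (\<i> * of_real d * k))"

definition jost_mid' :: "complex \<Rightarrow> complex \<Rightarrow> real \<Rightarrow> real \<Rightarrow> complex" where
  "jost_mid' k m d = harmonic' m d (exp (\<i> * of_real d * k)) (\<i> * k * exp (\<i> * of_real d * k))"

definition jost :: "complex \<Rightarrow> complex \<Rightarrow> real \<Rightarrow> real \<Rightarrow> complex" where
  "jost k m d = glue (-d) (harmonic k (-d) (jost_mid k m d (-d)) (jost_mid' k m d (-d)))
     (glue d (jost_mid k m d) (\<lambda>x. exp (\<i> * of_real x * k)))"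

definition jost' :: "complex \<Rightarrow> complex \<Rightarrow> real \<Rightarrow> real \<Rightarrow> complex" where
  "jost' k m d = glue (-d) (harmonic' k (-d) (jost_mid k m d (-d)) (jost_mid' k m d (-d)))
     (glue d (jost_mid' k m d) (\<lambda>x. \<i> * k * exp (\<i> * of_real x * k)))"

lemma has_vector_derivative_exp_ikx:
  "((\<lambda>x. exp (\<i> * of_real x * k)) has_vector_derivative \<i> * k * exp (\<i> * of_real x * k)) (at x)"
  "((\<lambda>x. \<i> * k * exp (\<i> * of_real x * k)) has_vector_derivative - (k\<^sup>2) * exp (\<i> * of_real x * k)) (at x)"
proof -
  have "((\<lambda>z. exp (\<i> * z * k)) has_field_derivative \<i> * k * exp (\<i> * of_real x * k)) (at (of_real x))"
    "((\<lambda>z. \<i> * k * exp (\<i> * z * k)) has_field_derivative - (k\<^sup>2) * exp (\<i> * of_real x * k)) (at (of_real x))"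
    by (auto intro!: derivative_eq_intros simp: power2_eq_square algebra_simps)
  then show "((\<lambda>x. exp (\<i> * of_real x * k)) has_vector_derivative \<i> * k * exp (\<i> * of_real x * k)) (at x)"
    "((\<lambda>x. \<i> * k * exp (\<i> * of_real x * k)) has_vector_derivative - (k\<^sup>2) * exp (\<i> * of_real x * k)) (at x)"
    using has_vector_derivative_real_field by force+
qed

lemma has_vector_derivative_jost:
  assumes "k \<noteq> 0" "m \<noteq> 0" "0 \<le> d"
  shows "(jost k m d has_vector_derivative jost' k m d x) (at x)"
  unfolding jost_def jost'_def jost_mid_def jost_mid'_def using assms
  by (intro has_vector_derivative_glue has_vector_derivative_harmonic has_vector_derivative_exp_ikx) simp_all

lemma continuous_on_jost':
  assumes "k \<noteq> 0" "m \<noteq> 0" "0 \<le> d"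
  shows "continuous_on UNIV (jost' k m d)"
  unfolding jost'_def jost_mid_def jost_mid'_def
  using assms has_vector_derivative_continuous[OF has_vector_derivative_exp_ikx(2)]
  by (intro continuous_on_glue continuous_on_harmonic continuous_at_imp_continuous_on) simp_all

lemma has_vector_derivative_jost':
  assumes "x \<noteq> d" "x \<noteq> -d" "0 \<le> d"
  shows "(jost' k m d has_vector_derivative - (if \<bar>x\<bar> < d then m\<^sup>2 else k\<^sup>2) * jost k m d x) (at x)"
proof -
  consider "x < -d" | "\<bar>x\<bar> < d" | "d < x" using assms by linarith
  then show ?thesis
  proof cases
    case 1
    then show ?thesis unfolding jost_def jost'_def
      by (intro has_vector_derivative_glue_off) (use has_vector_derivative_harmonic'[of k "-d"] in auto)
  next
    case 2
    then show ?thesis unfolding jost_def jost'_def jost_mid_def jost_mid'_def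
      by (intro has_vector_derivative_glue_off) (use has_vector_derivative_harmonic'[of m d] in auto)
  next
    case 3
    then show ?thesis using \<open>0 \<le> d\<close> unfolding jost_def jost'_def
      by (intro has_vector_derivative_glue_off) (use has_vector_derivative_exp_ikx(2)[of k] in auto)
  qed
qed

lemma kz_squared: "(kz k xi delta)\<^sup>2 = of_real (k\<^sup>2 - xi\<^sup>2) + \<i> * of_real delta"
  by (simp add: kz_def)

lemma kz_nonzero:
  assumes "0 < delta"
  shows "kz k xi delta \<noteq> 0"
proof
  assume "kz k xi delta = 0"
  then have "Im ((kz k xi delta)\<^sup>2) = 0" by simp
  with assms show False by (simp add: kz_squared)
qed

abbreviation ode_coeff :: "real \<Rightarrow> real \<Rightarrow> real \<Rightarrow> real \<Rightarrow> real \<Rightarrow> real \<Rightarrow> complex" where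
  "ode_coeff k1 k2 d xi delta x \<equiv> of_real (k1\<^sup>2 + qpot k1 k2 d x - xi\<^sup>2) + \<i> * of_real delta"

lemma is_solE:
  assumes "is_sol k1 k2 d xi delta u"
  obtains u' where "\<And>x. (u has_vector_derivative u' x) (at x)" "continuous_on UNIV u'"
    "\<And>x. x \<noteq> d \<Longrightarrow> x \<noteq> -d \<Longrightarrow> (u' has_vector_derivative
       - ode_coeff k1 k2 d xi delta x * u x) (at x)"
  using assms unfolding is_sol_def by blast

lemma is_sol_jost:
  assumes "0 < d" "0 < delta"
  shows "is_sol k1 k2 d xi delta (jost (kz k1 xi delta) (kz k2 xi delta) d)"
  unfolding is_sol_def
proof (intro exI conjI allI impI)
  let ?k = "kz k1 xi delta" and ?m = "kz k2 xi delta"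
  have nz: "?k \<noteq> 0" "?m \<noteq> 0" using kz_nonzero[OF \<open>0 < delta\<close>] by auto
  show "(jost ?k ?m d has_vector_derivative jost' ?k ?m d x) (at x)" for x
    using has_vector_derivative_jost[OF nz] \<open>0 < d\<close> by simp
  show "continuous_on UNIV (jost' ?k ?m d)"
    using continuous_on_jost'[OF nz] \<open>0 < d\<close> by simp
  fix x assume "x \<noteq> d \<and> x \<noteq> -d"
  moreover have "ode_coeff k1 k2 d xi delta x = (if \<bar>x\<bar> < d then ?m\<^sup>2 else ?k\<^sup>2)" if "x \<noteq> d" "x \<noteq> -d"
    using that by (auto simp: kz_squared qpot_def indicator_def)
  ultimately show "(jost' ?k ?m d has_vector_derivative
      - ode_coeff k1 k2 d xi delta x * jost ?k ?m d x) (at x)"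
    using has_vector_derivative_jost'[of x d] \<open>0 < d\<close> by simp
qed

lemma is_sol_diff:
  assumes "is_sol k1 k2 d xi delta u" "is_sol k1 k2 d xi delta v"
  shows "is_sol k1 k2 d xi delta (\<lambda>x. u x - v x)"
proof -
  obtain u' where u: "\<And>x. (u has_vector_derivative u' x) (at x)" "continuous_on UNIV u'"
    "\<And>x. x \<noteq> d \<Longrightarrow> x \<noteq> -d \<Longrightarrow> (u' has_vector_derivative
       - ode_coeff k1 k2 d xi delta x * u x) (at x)"
    using is_solE[OF assms(1)] by blast
  obtain v' where v: "\<And>x. (v has_vector_derivative v' x) (at x)" "continuous_on UNIV v'"
    "\<And>x. x \<noteq> d \<Longrightarrow> x \<noteq> -d \<Longrightarrow> (v' has_vector_derivative
       - ode_coeff k1 k2 d xi delta x * v x) (at x)"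
    using is_solE[OF assms(2)] by blast
  show ?thesis unfolding is_sol_def
  proof (intro exI[of _ "\<lambda>x. u' x - v' x"] conjI allI impI)
    show "((\<lambda>x. u x - v x) has_vector_derivative u' x - v' x) (at x)" for x
      using u(1) v(1) by (rule has_vector_derivative_diff)
    show "continuous_on UNIV (\<lambda>x. u' x - v' x)"
      using u(2) v(2) by (rule continuous_on_diff)
    fix x assume "x \<noteq> d \<and> x \<noteq> -d"
    then have "((\<lambda>x. u' x - v' x) has_vector_derivative
        - ode_coeff k1 k2 d xi delta x * u x
        - - ode_coeff k1 k2 d xi delta x * v x) (at x)"
      using u(3) v(3) by (intro has_vector_derivative_diff) auto
    then show "((\<lambda>x. u' x - v' x) has_vector_derivative
        - ode_coeff k1 k2 d xi delta x * (u x - v x)) (at x)"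
      by (simp add: algebra_simps)
  qed
qed

lemma is_sol_reflect:
  assumes "is_sol k1 k2 d xi delta u"
  shows "is_sol k1 k2 d xi delta (\<lambda>x. u (-x))"
proof -
  obtain u' where u: "\<And>x. (u has_vector_derivative u' x) (at x)" "continuous_on UNIV u'"
    "\<And>x. x \<noteq> d \<Longrightarrow> x \<noteq> -d \<Longrightarrow> (u' has_vector_derivative
       - ode_coeff k1 k2 d xi delta x * u x) (at x)"
    using is_solE[OF assms] by blast
  have qpot_even: "qpot k1 k2 d (-x) = qpot k1 k2 d x" for x
    by (auto simp: qpot_def indicator_def)
  show ?thesis unfolding is_sol_def
  proof (intro exI[of _ "\<lambda>x. - u' (-x)"] conjI allI impI)
    show "((\<lambda>x. u (-x)) has_vector_derivative - u' (-x)) (at x)" for x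
      by (rule has_vector_derivative_reflect[OF u(1)])
    show "continuous_on UNIV (\<lambda>x. - u' (-x))"
      by (intro continuous_on_minus continuous_on_compose2[OF u(2)] continuous_intros) auto
    fix x assume "x \<noteq> d \<and> x \<noteq> -d"
    then have "((\<lambda>x. u' (-x)) has_vector_derivative
        - (- ode_coeff k1 k2 d xi delta (-x) * u (-x))) (at x)"
      by (intro has_vector_derivative_reflect u(3)) auto
    then show "((\<lambda>x. - u' (-x)) has_vector_derivative
        - ode_coeff k1 k2 d xi delta x * u (-x)) (at x)"
      using has_vector_derivative_minus by (fastforce simp: qpot_even)
  qed
qed

lemma continuous_on_zero_closure:
  fixes f :: "'a::topological_space \<Rightarrow> 'b::{t2_space,zero}"
  assumes "continuous_on UNIV f" "\<And>x. x \<in> S \<Longrightarrow> f x = 0" "x \<in> closure S"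
  shows "f x = 0"
  using continuous_constant_on_closure[OF continuous_on_subset[OF assms(1) subset_UNIV] assms(2,3)] .

lemma has_vector_derivative_zero_where_zero:
  assumes "(w has_vector_derivative D) (at x)" "open S" "x \<in> S" "\<And>y. y \<in> S \<Longrightarrow> w y = 0"
  shows "D = 0"
proof -
  have "(w has_vector_derivative 0) (at x)"
    by (rule has_vector_derivative_transform_within_open[of "\<lambda>_. 0" _ _ S]) (use assms in auto)
  then show ?thesis using vector_derivative_unique_at[OF assms(1)] by simp
qed

lemma is_sol_zero_if_zero_right:
  assumes "0 < d" "0 < delta" "is_sol k1 k2 d xi delta w" and right: "\<And>x. d < x \<Longrightarrow> w x = 0"
  shows "w x = 0"
proof -
  obtain w' where w: "\<And>x. (w has_vector_derivative w' x) (at x)" "continuous_on UNIV w'"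
    "\<And>x. x \<noteq> d \<Longrightarrow> x \<noteq> -d \<Longrightarrow> (w' has_vector_derivative
       - ode_coeff k1 k2 d xi delta x * w x) (at x)"
    using is_solE[OF assms(3)] by blast
  have "continuous_on UNIV w"
    using w(1) by (intro continuous_at_imp_continuous_on ballI has_vector_derivative_continuous)
  have right': "w' x = 0" if "d < x" for x
    by (rule has_vector_derivative_zero_where_zero[OF w(1) open_greaterThan]) (use that right in auto)
  have at_d: "w d = 0" "w' d = 0"
    by (rule continuous_on_zero_closure[of _ "{d<..}"], fact, simp add: right right', simp)+
  have mid: "w y = 0 \<and> w' y = 0" if "y \<in> {-d<..<d}" for y
  proof (rule harmonic_ode_zero_on[OF kz_nonzero[OF \<open>0 < delta\<close>] convex_real_interval(8) _ _ _
        \<open>continuous_on UNIV w\<close> w(2) at_d that])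
    show "d \<in> closure {-d<..<d}" using \<open>0 < d\<close> by simp
  next
    fix x assume "x \<in> {-d<..<d}"
    then show "(w has_vector_derivative w' x) (at x)"
      "(w' has_vector_derivative - (kz k2 xi delta)\<^sup>2 * w x) (at x)"
      using w(1) w(3)[of x] by (auto simp: kz_squared qpot_def indicator_def)
  qed
  have at_minus_d: "w (-d) = 0" "w' (-d) = 0"
    by (rule continuous_on_zero_closure[of _ "{-d<..<d}"], fact, simp add: mid, use \<open>0 < d\<close> in simp)+
  have left: "w y = 0" if "y \<in> {..<-d}" for y
  proof (rule conjunct1[OF harmonic_ode_zero_on[OF kz_nonzero[OF \<open>0 < delta\<close>] convex_real_interval(4) _ _ _
        \<open>continuous_on UNIV w\<close> w(2) at_minus_d that]])
    show "-d \<in> closure {..<-d}" by simp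
  next
    fix x assume "x \<in> {..<-d}"
    then show "(w has_vector_derivative w' x) (at x)"
      "(w' has_vector_derivative - (kz k1 xi delta)\<^sup>2 * w x) (at x)"
      using w(1) w(3)[of x] \<open>0 < d\<close> by (auto simp: kz_squared qpot_def indicator_def)
  qed
  consider "d < x" | "x = d" | "x \<in> {-d<..<d}" | "x = -d" | "x \<in> {..<-d}" by force
  then show ?thesis using right at_d mid at_minus_d left by cases auto
qed

lemma jost_unique:
  assumes "0 < d" "0 < delta" "is_sol k1 k2 d xi delta v"
    and "\<And>x. d < x \<Longrightarrow> v x = exp (\<i> * of_real x * kz k1 xi delta)"
  shows "v = jost (kz k1 xi delta) (kz k2 xi delta) d"
proof -
  have "v x - jost (kz k1 xi delta) (kz k2 xi delta) d x = 0" for x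
    using is_sol_zero_if_zero_right[OF assms(1,2) is_sol_diff[OF assms(3) is_sol_jost[OF assms(1,2)]]]
      assms(1,4) by (simp add: jost_def)
  then show ?thesis by auto
qed

lemma u_plus_eq_jost:
  assumes "0 < d" "0 < delta"
  shows "u_plus k1 k2 d xi delta = jost (kz k1 xi delta) (kz k2 xi delta) d"
  unfolding u_plus_def
  using is_sol_jost[OF assms] jost_unique[OF assms] \<open>0 < d\<close>
  by (intro the_equality) (auto simp: jost_def)

lemma u_minus_eq_jost:
  assumes "0 < d" "0 < delta"
  shows "u_minus k1 k2 d xi delta = (\<lambda>x. jost (kz k1 xi delta) (kz k2 xi delta) d (-x))"
  unfolding u_minus_def
proof (rule the_equality)
  show "is_sol k1 k2 d xi delta (\<lambda>x. jost (kz k1 xi delta) (kz k2 xi delta) d (-x)) \<and>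
      (\<forall>x < -d. jost (kz k1 xi delta) (kz k2 xi delta) d (-x) = exp (- \<i> * of_real x * kz k1 xi delta))"
    using is_sol_reflect[OF is_sol_jost[OF assms]] \<open>0 < d\<close> by (simp add: jost_def)
  fix v assume v: "is_sol k1 k2 d xi delta v \<and> (\<forall>x < -d. v x = exp (- \<i> * of_real x * kz k1 xi delta))"
  have "(\<lambda>x. v (-x)) = jost (kz k1 xi delta) (kz k2 xi delta) d"
    using v by (intro jost_unique[OF assms] is_sol_reflect) auto
  from fun_cong[OF this, of "-x" for x]
  show "v = (\<lambda>x. jost (kz k1 xi delta) (kz k2 xi delta) d (-x))" by auto
qed

section \<open>Closed form of the Wronskian\<close>

definition sin_div :: "real \<Rightarrow> complex \<Rightarrow> complex" where
  "sin_div d m = (if m = 0 then of_real d else sin (m * of_real d) / m)"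

definition jost_val :: "real \<Rightarrow> complex \<Rightarrow> complex \<Rightarrow> complex" where
  "jost_val d k m = cos (m * of_real d) - \<i> * k * sin_div d m"

definition jost_der :: "real \<Rightarrow> complex \<Rightarrow> complex \<Rightarrow> complex" where
  "jost_der d k m = m * sin (m * of_real d) + \<i> * k * cos (m * of_real d)"

definition wronsk :: "real \<Rightarrow> complex \<Rightarrow> complex \<Rightarrow> complex" where
  "wronsk d k m = 2 * exp (2 * \<i> * of_real d * k) * jost_val d k m * jost_der d k m"

lemma jost_at_0:
  assumes "0 < d" "m \<noteq> 0"
  shows "jost k m d 0 = exp (\<i> * of_real d * k) * jost_val d k m"
    "jost' k m d 0 = exp (\<i> * of_real d * k) * jost_der d k m"
  using assms
  by (simp_all add: jost_def jost'_def jost_mid_def jost_mid'_def harmonic_def harmonic'_def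
      jost_val_def jost_der_def sin_div_def algebra_simps)

lemma Wr_eq_wronsk:
  assumes "0 < d" "0 < delta"
  shows "Wr k1 k2 d xi delta = wronsk d (kz k1 xi delta) (kz k2 xi delta)"
proof -
  let ?k = "kz k1 xi delta" and ?m = "kz k2 xi delta"
  have nz: "?k \<noteq> 0" "?m \<noteq> 0" using kz_nonzero[OF \<open>0 < delta\<close>] by auto
  have deriv: "(jost ?k ?m d has_vector_derivative jost' ?k ?m d 0) (at 0)"
    using has_vector_derivative_jost[OF nz] \<open>0 < d\<close> by simp
  have "((\<lambda>x. jost ?k ?m d (-x)) has_vector_derivative - jost' ?k ?m d 0) (at 0)"
    using has_vector_derivative_reflect[of "jost ?k ?m d" _ 0] deriv by simp
  note deriv_reflected = vector_derivative_at[OF this]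
  have "Wr k1 k2 d xi delta = 2 * jost ?k ?m d 0 * jost' ?k ?m d 0"
    unfolding Wr_def u_plus_eq_jost[OF assms] u_minus_eq_jost[OF assms]
    by (simp add: vector_derivative_at[OF deriv] deriv_reflected)
  also have "\<dots> = wronsk d ?k ?m"
    using \<open>0 < d\<close> nz
    by (simp add: jost_at_0 wronsk_def exp_add[symmetric] algebra_simps)
  finally show ?thesis .
qed

section \<open>No zeros for delta > 0\<close>

lemma sinh_real_gt_self:
  fixes x :: real
  assumes "0 < x"
  shows "x < sinh x"
proof -
  have "sinh 0 - 0 < sinh x - x"
  proof (rule DERIV_pos_imp_increasing_open[OF assms])
    fix t :: real assume "0 < t" "t < x"
    then have "cosh t \<noteq> 1"
      using cosh_square_eq[of t] by auto
    then have "1 < cosh t" using cosh_real_ge_1[of t] by linarith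
    then show "\<exists>y. ((\<lambda>t. sinh t - t) has_real_derivative y) (at t) \<and> 0 < y"
      by (intro exI[of _ "cosh t - 1"]) (auto intro!: derivative_eq_intros)
  qed (intro continuous_intros)
  then show ?thesis by simp
qed

lemma sin_mult_cnj_cos:
  "sin z * cnj (cos z) = (of_real (sin (2 * Re z)) + \<i> * of_real (sinh (2 * Im z))) / 2"
proof -
  have "sin z * cnj (cos z) = (sin (z + cnj z) + sin (z - cnj z)) / 2"
    by (simp add: cnj_cos sin_times_cos)
  also have "z + cnj z = of_real (2 * Re z)" by (simp add: complex_add_cnj)
  also have "z - cnj z = \<i> * of_real (2 * Im z)" by (simp add: complex_diff_cnj)
  finally show ?thesis
    by (simp add: sin_of_real sin_i_times sinh_def exp_of_real exp_minus del: of_real_mult)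
qed

lemma Im_mult_sin_cnj_cos:
  assumes "0 < Re m" "0 < Im m" "0 < d"
  shows "Im (m * cos (m * of_real d) * cnj (sin (m * of_real d))) < 0"
    "0 < Im (m * sin (m * of_real d) * cnj (cos (m * of_real d)))"
proof -
  define A where "A = sin (2 * Re m * d)"
  define B where "B = sinh (2 * Im m * d)"
  have "\<bar>A\<bar> \<le> 2 * Re m * d"
    using abs_sin_x_le_abs_x[of "2 * Re m * d"] assms by (simp add: A_def)
  then have "Im m * \<bar>A\<bar> \<le> Im m * (2 * Re m * d)"
    using assms(2) by (simp add: mult_left_mono)
  also have "\<dots> < Re m * B"
    using sinh_real_gt_self[of "2 * Im m * d"] assms by (simp add: B_def)
  finally have key: "\<bar>Im m * A\<bar> < Re m * B"
    using assms(2) by (simp add: abs_mult)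
  have w: "sin (m * of_real d) * cnj (cos (m * of_real d)) = (of_real A + \<i> * of_real B) / 2"
    by (simp add: sin_mult_cnj_cos A_def B_def mult.assoc)
  have "m * cos (m * of_real d) * cnj (sin (m * of_real d))
      = m * cnj (sin (m * of_real d) * cnj (cos (m * of_real d)))"
    by simp
  then have "Im (m * cos (m * of_real d) * cnj (sin (m * of_real d))) = (Im m * A - Re m * B) / 2"
    by (simp only: w) simp
  then show "Im (m * cos (m * of_real d) * cnj (sin (m * of_real d))) < 0"
    using key by (simp add: abs_less_iff)
  have "Im (m * sin (m * of_real d) * cnj (cos (m * of_real d))) = (Im m * A + Re m * B) / 2"
    by (simp only: mult.assoc w) simp
  then show "0 < Im (m * sin (m * of_real d) * cnj (cos (m * of_real d)))"
    using key by (simp add: abs_less_iff)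
qed

lemma jost_val_der_nonzero:
  assumes "0 \<le> Re k" "0 < Re m" "0 < Im m" "0 < d"
  shows "jost_val d k m \<noteq> 0" "jost_der d k m \<noteq> 0"
proof -
  let ?s = "sin (m * of_real d)" and ?c = "cos (m * of_real d)"
  have "m \<noteq> 0" using assms(2) by auto
  have Im_i_mult: "Im (\<i> * k * (z * cnj z)) = Re k * ((Re z)\<^sup>2 + (Im z)\<^sup>2)" for z
    by (simp add: complex_mult_cnj)
  show "jost_val d k m \<noteq> 0"
  proof
    assume "jost_val d k m = 0"
    then have "m * ?c = \<i> * k * ?s"
      using \<open>m \<noteq> 0\<close> by (simp add: jost_val_def sin_div_def field_simps)
    then have "Im (m * ?c * cnj ?s) = Im (\<i> * k * (?s * cnj ?s))"
      by (simp only: mult.assoc)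
    also have "\<dots> \<ge> 0"
      unfolding Im_i_mult using assms(1) by simp
    finally show False using Im_mult_sin_cnj_cos(1)[OF assms(2-4)] by simp
  qed
  show "jost_der d k m \<noteq> 0"
  proof
    assume "jost_der d k m = 0"
    then have "m * ?s = - (\<i> * k * ?c)"
      by (simp add: jost_der_def eq_neg_iff_add_eq_0)
    then have "Im (m * ?s * cnj ?c) = - Im (\<i> * k * (?c * cnj ?c))"
      by (simp only: mult.assoc mult_minus_left uminus_complex.sel)
    also have "\<dots> \<le> 0"
      unfolding Im_i_mult using assms(1) by simp
    finally show False using Im_mult_sin_cnj_cos(2)[OF assms(2-4)] by simp
  qed
qed

lemma csqrt_upper_half_plane:
  assumes "0 < Im z"
  shows "0 < Re (csqrt z)" "0 < Im (csqrt z)"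
proof -
  define w where "w = csqrt z"
  have "w\<^sup>2 = z" "0 \<le> Re w" unfolding w_def by (rule power2_csqrt, rule Re_csqrt)
  then have "Im z = 2 * Re w * Im w" using Im_power2[of w] by simp
  with assms \<open>0 \<le> Re w\<close> have "0 < Re w \<and> 0 < Im w"
    by (auto simp: zero_less_mult_iff)
  then show "0 < Re (csqrt z)" "0 < Im (csqrt z)" unfolding w_def by blast+
qed

lemma Wr_nonzero:
  assumes "0 < d" "0 < delta"
  shows "Wr k1 k2 d xi delta \<noteq> 0"
proof -
  have "0 < Re (kz k2 xi delta)" "0 < Im (kz k2 xi delta)"
    unfolding kz_def by (rule csqrt_upper_half_plane, simp add: assms)+
  moreover have "0 \<le> Re (kz k1 xi delta)" unfolding kz_def by (rule Re_csqrt)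
  ultimately show ?thesis
    using jost_val_der_nonzero \<open>0 < d\<close> by (simp add: Wr_eq_wronsk[OF assms] wronsk_def)
qed

section \<open>The limit delta -> 0+\<close>

lemma csqrt_of_real_eq: "csqrt (of_real r) = Complex (sqrt ((\<bar>r\<bar> + r) / 2)) (sqrt ((\<bar>r\<bar> - r) / 2))"
  by (simp add: complex_eq_iff)

lemma tendsto_csqrt_upper_half_plane:
  "((\<lambda>t. csqrt (of_real r + \<i> * of_real t)) \<longlongrightarrow> csqrt (of_real r)) (at_right 0)"
proof -
  let ?f = "\<lambda>t. Complex (sqrt ((sqrt (r\<^sup>2 + t\<^sup>2) + r) / 2)) (sqrt ((sqrt (r\<^sup>2 + t\<^sup>2) - r) / 2))"
  have "\<forall>\<^sub>F t in at_right 0. ?f t = csqrt (of_real r + \<i> * of_real t)"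
    using eventually_at_right_less[of 0] by eventually_elim (simp add: complex_eq_iff cmod_def)
  moreover have "(?f \<longlongrightarrow> Complex (sqrt ((sqrt (r\<^sup>2 + 0\<^sup>2) + r) / 2)) (sqrt ((sqrt (r\<^sup>2 + 0\<^sup>2) - r) / 2)))
      (at_right 0)"
    by (intro tendsto_intros tendsto_ident_at) auto
  then have "(?f \<longlongrightarrow> csqrt (of_real r)) (at_right 0)" by (simp add: csqrt_of_real_eq)
  ultimately show ?thesis by (rule Lim_transform_eventually[rotated])
qed

lemma isCont_sin_div: "isCont (sin_div d) z"
proof (cases "z = 0")
  case True
  have "((\<lambda>w. sin (w * complex_of_real d)) has_field_derivative of_real d) (at 0)"
    by (auto intro!: derivative_eq_intros)
  then have "((\<lambda>w. sin (w * complex_of_real d) / w) \<longlongrightarrow> of_real d) (at 0)"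
    by (simp add: has_field_derivative_iff)
  then have "(sin_div d \<longlongrightarrow> of_real d) (at 0)"
    by (rule Lim_transform_eventually) (auto simp: eventually_at_filter sin_div_def)
  with True show ?thesis by (simp add: isCont_def sin_div_def)
next
  case False
  have "\<forall>\<^sub>F w in nhds z. sin (w * of_real d) / w = sin_div d w"
    using t1_space_nhds[OF False] by eventually_elim (simp add: sin_div_def)
  moreover have "isCont (\<lambda>w. sin (w * of_real d) / w) z"
    using False by (intro continuous_intros) auto
  ultimately show ?thesis using isCont_cong by fastforce
qed

lemma tendsto_wronsk:
  assumes "(f \<longlongrightarrow> k) F" "(g \<longlongrightarrow> m) F"
  shows "((\<lambda>x. wronsk d (f x) (g x)) \<longlongrightarrow> wronsk d k m) F"
proof -
  have gd: "((\<lambda>x. g x * of_real d) \<longlongrightarrow> m * of_real d) F"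
    by (rule tendsto_mult_right[OF assms(2)])
  have "((\<lambda>x. sin_div d (g x)) \<longlongrightarrow> sin_div d m) F"
    "((\<lambda>x. cos (g x * of_real d)) \<longlongrightarrow> cos (m * of_real d)) F"
    "((\<lambda>x. sin (g x * of_real d)) \<longlongrightarrow> sin (m * of_real d)) F"
    by (rule isCont_tendsto_compose[OF isCont_sin_div assms(2)],
        rule isCont_tendsto_compose[OF isCont_cos gd], rule isCont_tendsto_compose[OF isCont_sin gd])
  then show ?thesis
    unfolding wronsk_def jost_val_def jost_der_def
    by (intro tendsto_intros assms)
qed

lemma Wr_tendsto_wronsk:
  assumes "0 < d"
  shows "((\<lambda>delta. Wr k1 k2 d xi delta) \<longlongrightarrow>
    wronsk d (csqrt (of_real (k1\<^sup>2 - xi\<^sup>2))) (csqrt (of_real (k2\<^sup>2 - xi\<^sup>2)))) (at_right 0)"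
proof -
  have "\<forall>\<^sub>F delta in at_right 0. wronsk d (kz k1 xi delta) (kz k2 xi delta) = Wr k1 k2 d xi delta"
    using eventually_at_right_less[of 0] by eventually_elim (simp add: Wr_eq_wronsk[OF assms])
  moreover have "((\<lambda>delta. wronsk d (kz k1 xi delta) (kz k2 xi delta)) \<longlongrightarrow>
      wronsk d (csqrt (of_real (k1\<^sup>2 - xi\<^sup>2))) (csqrt (of_real (k2\<^sup>2 - xi\<^sup>2)))) (at_right 0)"
    unfolding kz_def by (intro tendsto_wronsk tendsto_csqrt_upper_half_plane)
  ultimately show ?thesis by (rule Lim_transform_eventually[rotated])
qed

lemma W0_eq_wronsk:
  assumes "0 < d"
  shows "W0 k1 k2 d xi = wronsk d (csqrt (of_real (k1\<^sup>2 - xi\<^sup>2))) (csqrt (of_real (k2\<^sup>2 - xi\<^sup>2)))"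
  unfolding W0_def by (rule tendsto_Lim[OF trivial_limit_at_right_real Wr_tendsto_wronsk[OF assms]])

lemma W0_minus:
  assumes "0 < d"
  shows "W0 k1 k2 d (- xi) = W0 k1 k2 d xi"
  by (simp only: W0_eq_wronsk[OF assms] power2_minus)

lemma Wr_tendsto_0_iff:
  assumes "0 < d"
  shows "((\<lambda>delta. Wr k1 k2 d xi delta) \<longlongrightarrow> 0) (at_right 0) \<longleftrightarrow> W0 k1 k2 d xi = 0"
  using Wr_tendsto_wronsk[OF assms] tendsto_unique[OF trivial_limit_at_right_real]
  unfolding W0_eq_wronsk[OF assms] by metis

lemma continuous_on_W0:
  assumes "0 < d"
  shows "continuous_on UNIV (W0 k1 k2 d)"
proof -
  have "((\<lambda>y. csqrt (of_real (c - y\<^sup>2))) \<longlongrightarrow> csqrt (of_real (c - x\<^sup>2))) (at x)" for c x :: real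
    unfolding csqrt_of_real_eq by (intro tendsto_intros) auto
  then show ?thesis
    unfolding continuous_on_def W0_eq_wronsk[OF assms, abs_def] by (intro ballI tendsto_wronsk)
qed

section \<open>Zeros of the limiting Wronskian\<close>

lemma jost_val_der_real_zero:
  fixes a b :: real
  assumes "0 < b" "jost_val d a b = 0 \<or> jost_der d a b = 0"
  shows "a = 0" "sin (2 * (b * d)) = 0"
proof -
  have cs: "cos (of_real b * of_real d) = of_real (cos (b * d))"
    "sin (of_real b * of_real d) = of_real (sin (b * d))"
    by (simp_all flip: cos_of_real sin_of_real)
  have "(cos (b * d) = 0 \<and> a * sin (b * d) = 0) \<or> (sin (b * d) = 0 \<and> a * cos (b * d) = 0)"
    using assms by (auto simp: jost_val_def jost_der_def sin_div_def cs complex_eq_iff)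
  moreover have "sin (b * d) \<noteq> 0 \<or> cos (b * d) \<noteq> 0"
    by (auto dest: sin_zero_abs_cos_one)
  ultimately show "a = 0" "sin (2 * (b * d)) = 0"
    by (auto simp: sin_double)
qed

lemma cos_i_times_real: "cos (\<i> * of_real x) = of_real (cosh x)"
  and sin_i_times_real: "sin (\<i> * of_real x) = \<i> * of_real (sinh x)"
  by (simp_all add: cos_i_times sin_i_times cosh_def sinh_def exp_of_real exp_minus del: of_real_mult)

lemma jost_val_der_imag_nonzero:
  assumes "0 < g" "0 \<le> n" "0 < d"
  shows "jost_val d (\<i> * of_real g) (\<i> * of_real n) \<noteq> 0"
    "jost_der d (\<i> * of_real g) (\<i> * of_real n) \<noteq> 0"
proof -
  have arg: "\<i> * of_real n * of_real d = \<i> * of_real (n * d)" by simp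
  have "jost_val d (\<i> * of_real g) (\<i> * of_real n)
      = of_real (cosh (n * d) + g * (if n = 0 then d else sinh (n * d) / n))"
    unfolding jost_val_def sin_div_def arg cos_i_times_real sin_i_times_real
    by (simp add: field_simps)
  moreover have "0 < cosh (n * d) + g * (if n = 0 then d else sinh (n * d) / n)"
    using assms cosh_real_ge_1[of "n * d"] by (auto intro!: add_pos_nonneg)
  ultimately show "jost_val d (\<i> * of_real g) (\<i> * of_real n) \<noteq> 0"
    by (metis of_real_eq_0_iff order_less_irrefl)
  have "jost_der d (\<i> * of_real g) (\<i> * of_real n) = - of_real (n * sinh (n * d) + g * cosh (n * d))"
    unfolding jost_der_def arg cos_i_times_real sin_i_times_real
    by (simp add: algebra_simps)
  moreover have "0 < n * sinh (n * d) + g * cosh (n * d)"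
    using assms cosh_real_ge_1[of "n * d"] by (auto intro!: add_nonneg_pos)
  ultimately show "jost_der d (\<i> * of_real g) (\<i> * of_real n) \<noteq> 0"
    by (metis neg_equal_0_iff_equal of_real_eq_0_iff order_less_irrefl)
qed

lemma wronsk_zero_iff: "wronsk d k m = 0 \<longleftrightarrow> jost_val d k m = 0 \<or> jost_der d k m = 0"
  by (simp add: wronsk_def)

lemma sin_double_zero_imp_resonance:
  assumes "0 < x" "sin (2 * x) = 0"
  obtains n :: nat where "0 < n" "2 * x = real n * pi"
proof -
  obtain i :: int where i: "2 * x = of_int i * pi"
    using assms(2) by (auto simp: sin_zero_iff_int2)
  with assms(1) have "0 < of_int i * pi" by linarith
  then have "0 < i" by (simp add: zero_less_mult_iff)
  with i show ?thesis by (intro that[of "nat i"]) auto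
qed

lemma W0_zero_imp_between:
  assumes "0 < k1" "k1 < k2" "0 < d"
    and nonresonant: "\<forall>n::nat. n > 0 \<longrightarrow> 2 * d * sqrt (k2\<^sup>2 - k1\<^sup>2) \<noteq> real n * pi"
    and "W0 k1 k2 d xi = 0"
  shows "k1\<^sup>2 < xi\<^sup>2" "xi\<^sup>2 < k2\<^sup>2"
proof -
  have k12: "k1\<^sup>2 < k2\<^sup>2" using assms(1,2) by (simp add: power_strict_mono)
  let ?k = "csqrt (of_real (k1\<^sup>2 - xi\<^sup>2))" and ?m = "csqrt (of_real (k2\<^sup>2 - xi\<^sup>2))"
  have zero: "jost_val d ?k ?m = 0 \<or> jost_der d ?k ?m = 0"
    using assms(5) by (simp add: W0_eq_wronsk[OF \<open>0 < d\<close>] wronsk_zero_iff)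
  show "k1\<^sup>2 < xi\<^sup>2"
  proof (rule ccontr)
    assume "\<not> k1\<^sup>2 < xi\<^sup>2"
    then have "?k = of_real (sqrt (k1\<^sup>2 - xi\<^sup>2))" "?m = of_real (sqrt (k2\<^sup>2 - xi\<^sup>2))"
      using k12 by (simp_all add: csqrt_of_real)
    moreover have "0 < sqrt (k2\<^sup>2 - xi\<^sup>2)" using \<open>\<not> k1\<^sup>2 < xi\<^sup>2\<close> k12 by simp
    ultimately have "sqrt (k1\<^sup>2 - xi\<^sup>2) = 0" "sin (2 * (sqrt (k2\<^sup>2 - xi\<^sup>2) * d)) = 0"
      using jost_val_der_real_zero zero by metis+
    then have "sin (2 * (sqrt (k2\<^sup>2 - k1\<^sup>2) * d)) = 0" by simp
    then obtain n :: nat where "0 < n" "2 * (sqrt (k2\<^sup>2 - k1\<^sup>2) * d) = real n * pi"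
      using sin_double_zero_imp_resonance k12 \<open>0 < d\<close> by (metis diff_gt_0_iff_gt mult_pos_pos real_sqrt_gt_zero)
    with nonresonant show False by (simp add: mult_ac)
  qed
  show "xi\<^sup>2 < k2\<^sup>2"
  proof (rule ccontr)
    assume "\<not> xi\<^sup>2 < k2\<^sup>2"
    then have "?k = \<i> * of_real (sqrt (xi\<^sup>2 - k1\<^sup>2))" "?m = \<i> * of_real (sqrt (xi\<^sup>2 - k2\<^sup>2))"
      using k12 by (simp_all add: csqrt_of_real_nonpos del: of_real_diff of_real_power)
    moreover have "0 < sqrt (xi\<^sup>2 - k1\<^sup>2)" using \<open>\<not> xi\<^sup>2 < k2\<^sup>2\<close> k12 by simp
    ultimately show False
      using jost_val_der_imag_nonzero[OF _ _ \<open>0 < d\<close>] zero \<open>\<not> xi\<^sup>2 < k2\<^sup>2\<close> by auto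
  qed
qed

lemma harmonic_addition:
  fixes b g t :: real
  assumes "0 < b"
  shows "b * sin t - g * cos t = sqrt (b\<^sup>2 + g\<^sup>2) * sin (t - arctan (g / b))"
    "b * cos t + g * sin t = sqrt (b\<^sup>2 + g\<^sup>2) * cos (t - arctan (g / b))"
proof -
  have r: "sqrt (1 + (g / b)\<^sup>2) = sqrt (b\<^sup>2 + g\<^sup>2) / b"
    using assms by (simp add: field_simps real_sqrt_divide flip: real_sqrt_mult) 
  have "sqrt (b\<^sup>2 + g\<^sup>2) * cos (arctan (g / b)) = b" "sqrt (b\<^sup>2 + g\<^sup>2) * sin (arctan (g / b)) = g"
    using assms by (simp_all add: cos_arctan sin_arctan r)
  then show "b * sin t - g * cos t = sqrt (b\<^sup>2 + g\<^sup>2) * sin (t - arctan (g / b))"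
    "b * cos t + g * sin t = sqrt (b\<^sup>2 + g\<^sup>2) * cos (t - arctan (g / b))"
    by (simp_all add: sin_diff cos_diff algebra_simps)
qed

definition prufer_angle :: "real \<Rightarrow> real \<Rightarrow> real \<Rightarrow> real \<Rightarrow> real" where
  "prufer_angle k1 k2 d x = sqrt (k2\<^sup>2 - x\<^sup>2) * d - arctan (sqrt (x\<^sup>2 - k1\<^sup>2) / sqrt (k2\<^sup>2 - x\<^sup>2))"

definition prufer_amp :: "real \<Rightarrow> real \<Rightarrow> real \<Rightarrow> real \<Rightarrow> real" where
  "prufer_amp k1 k2 d x = (k2\<^sup>2 - k1\<^sup>2) * exp (- (2 * d * sqrt (x\<^sup>2 - k1\<^sup>2))) / sqrt (k2\<^sup>2 - x\<^sup>2)"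

definition prufer_form :: "real \<Rightarrow> real \<Rightarrow> real \<Rightarrow> real \<Rightarrow> real" where
  "prufer_form k1 k2 d x = prufer_amp k1 k2 d x * sin (2 * prufer_angle k1 k2 d x)"

lemma W0_prufer:
  assumes "0 < d" "k1\<^sup>2 < x\<^sup>2" "x\<^sup>2 < k2\<^sup>2"
  shows "W0 k1 k2 d x = of_real (prufer_form k1 k2 d x)"
proof -
  define b where "b = sqrt (k2\<^sup>2 - x\<^sup>2)"
  define g where "g = sqrt (x\<^sup>2 - k1\<^sup>2)"
  define \<theta> where "\<theta> = prufer_angle k1 k2 d x"
  have "0 < b" using assms(3) by (simp add: b_def)
  have V: "b\<^sup>2 + g\<^sup>2 = k2\<^sup>2 - k1\<^sup>2" using assms(2,3) by (simp add: b_def g_def)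
  have \<theta>: "\<theta> = b * d - arctan (g / b)" by (simp add: \<theta>_def prufer_angle_def b_def g_def)
  have "csqrt (of_real (k1\<^sup>2 - x\<^sup>2)) = \<i> * of_real g"
    using assms(2) by (simp add: g_def csqrt_of_real_nonpos del: of_real_diff of_real_power)
  moreover have "csqrt (of_real (k2\<^sup>2 - x\<^sup>2)) = of_real b"
    using assms(3) by (simp add: b_def csqrt_of_real)
  moreover have "exp (2 * \<i> * of_real d * (\<i> * of_real g)) = of_real (exp (- (2 * d * g)))"
    by (simp add: exp_of_real[symmetric] algebra_simps)
  moreover have "jost_val d (\<i> * of_real g) (of_real b) = of_real ((b * cos (b * d) + g * sin (b * d)) / b)"
    "jost_der d (\<i> * of_real g) (of_real b) = of_real (b * sin (b * d) - g * cos (b * d))"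
    using \<open>0 < b\<close> by (simp_all add: jost_val_def jost_der_def sin_div_def field_simps
        flip: cos_of_real sin_of_real)
  ultimately have "W0 k1 k2 d x = of_real (2 * exp (- (2 * d * g)) *
      ((b * cos (b * d) + g * sin (b * d)) / b) * (b * sin (b * d) - g * cos (b * d)))"
    by (simp add: W0_eq_wronsk[OF \<open>0 < d\<close>] wronsk_def)
  also have "\<dots> = of_real (2 * exp (- (2 * d * g)) * (sqrt (b\<^sup>2 + g\<^sup>2) * cos \<theta> / b)
      * (sqrt (b\<^sup>2 + g\<^sup>2) * sin \<theta>))"
    unfolding \<theta> harmonic_addition[OF \<open>0 < b\<close>] ..
  also have "2 * exp (- (2 * d * g)) * (sqrt (b\<^sup>2 + g\<^sup>2) * cos \<theta> / b) * (sqrt (b\<^sup>2 + g\<^sup>2) * sin \<theta>)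
      = (sqrt (b\<^sup>2 + g\<^sup>2) * sqrt (b\<^sup>2 + g\<^sup>2)) * exp (- (2 * d * g)) * (2 * sin \<theta> * cos \<theta>) / b"
    by (simp add: field_simps)
  also have "\<dots> = prufer_form k1 k2 d x"
    using assms(2,3) unfolding real_sqrt_mult_self V
    by (simp add: prufer_form_def prufer_amp_def \<theta>_def b_def g_def sin_double)
  finally show ?thesis .
qed

lemma has_real_derivative_sqrt_diff_sq:
  fixes c x :: real
  shows "x\<^sup>2 < c \<Longrightarrow> ((\<lambda>y. sqrt (c - y\<^sup>2)) has_real_derivative - x / sqrt (c - x\<^sup>2)) (at x)"
    and "c < x\<^sup>2 \<Longrightarrow> ((\<lambda>y. sqrt (y\<^sup>2 - c)) has_real_derivative x / sqrt (x\<^sup>2 - c)) (at x)"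
  by (auto intro!: derivative_eq_intros simp: field_simps)

lemma has_real_derivative_arctan_quotient:
  fixes b g :: "real \<Rightarrow> real"
  assumes "(b has_real_derivative - x / b x) (at x)" "(g has_real_derivative x / g x) (at x)"
    and "0 < b x" "0 < g x"
  shows "((\<lambda>y. arctan (g y / b y)) has_real_derivative x / (g x * b x)) (at x)"
proof -
  have "((\<lambda>y. g y / b y) has_real_derivative (x / g x * b x - g x * (- x / b x)) / (b x * b x)) (at x)"
    using assms by (auto intro!: derivative_eq_intros)
  then have "((\<lambda>y. arctan (g y / b y)) has_real_derivative
      inverse (1 + (g x / b x)\<^sup>2) * ((x / g x * b x - g x * (- x / b x)) / (b x * b x))) (at x)"
    by (rule DERIV_chain2[OF DERIV_arctan])
  moreover have "inverse (1 + (g x / b x)\<^sup>2) * ((x / g x * b x - g x * (- x / b x)) / (b x * b x))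
      = x / (g x * b x)"
  proof -
    define s where "s = (b x)\<^sup>2 + (g x)\<^sup>2"
    have "0 < s" using \<open>0 < b x\<close> by (simp add: s_def add_pos_nonneg)
    have "1 + (g x / b x)\<^sup>2 = s / (b x)\<^sup>2" "x / g x * b x - g x * (- x / b x) = x * s / (g x * b x)"
      using \<open>0 < b x\<close> \<open>0 < g x\<close> by (simp_all add: s_def field_simps power2_eq_square)
    then show ?thesis
      using \<open>0 < b x\<close> \<open>0 < g x\<close> \<open>0 < s\<close> by (simp add: field_simps power2_eq_square)
  qed
  ultimately show ?thesis by simp
qed

lemma has_real_derivative_prufer_angle:
  assumes "k1\<^sup>2 < x\<^sup>2" "x\<^sup>2 < k2\<^sup>2"
  shows "(prufer_angle k1 k2 d has_real_derivative
    - x * (d + 1 / sqrt (x\<^sup>2 - k1\<^sup>2)) / sqrt (k2\<^sup>2 - x\<^sup>2)) (at x)"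
proof -
  define b where "b = (\<lambda>y. sqrt (k2\<^sup>2 - y\<^sup>2))"
  define g where "g = (\<lambda>y. sqrt (y\<^sup>2 - k1\<^sup>2))"
  have "0 < b x" "0 < g x" using assms by (simp_all add: b_def g_def)
  have bd: "(b has_real_derivative - x / b x) (at x)" and gd: "(g has_real_derivative x / g x) (at x)"
    unfolding b_def g_def
    by (rule has_real_derivative_sqrt_diff_sq(1)[OF assms(2)], rule has_real_derivative_sqrt_diff_sq(2)[OF assms(1)])
  have "((\<lambda>y. b y * d - arctan (g y / b y)) has_real_derivative - x / b x * d - x / (g x * b x)) (at x)"
    by (intro DERIV_diff DERIV_cmult_right bd has_real_derivative_arctan_quotient gd) fact+
  moreover have "- x / b x * d - x / (g x * b x) = - x * (d + 1 / g x) / b x"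
    using \<open>0 < b x\<close> \<open>0 < g x\<close> by (simp add: field_simps)
  ultimately show ?thesis
    by (simp add: prufer_angle_def[abs_def] b_def g_def)
qed

lemma prufer_amp_pos: "k1\<^sup>2 < x\<^sup>2 \<Longrightarrow> x\<^sup>2 < k2\<^sup>2 \<Longrightarrow> 0 < prufer_amp k1 k2 d x"
  by (simp add: prufer_amp_def)

lemma prufer_amp_differentiable:
  assumes "k1\<^sup>2 < x\<^sup>2" "x\<^sup>2 < k2\<^sup>2"
  shows "\<exists>A'. (prufer_amp k1 k2 d has_real_derivative A') (at x)"
proof -
  define b where "b = (\<lambda>y. sqrt (k2\<^sup>2 - y\<^sup>2))"
  define g where "g = (\<lambda>y. sqrt (y\<^sup>2 - k1\<^sup>2))"
  have "(b has_real_derivative - x / b x) (at x)" "(g has_real_derivative x / g x) (at x)" "b x \<noteq> 0"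
    unfolding b_def g_def
    by (rule has_real_derivative_sqrt_diff_sq(1)[OF assms(2)], rule has_real_derivative_sqrt_diff_sq(2)[OF assms(1)],
        use assms(2) in simp)
  moreover have "prufer_amp k1 k2 d = (\<lambda>y. (k2\<^sup>2 - k1\<^sup>2) * exp (- (2 * d * g y)) / b y)"
    by (simp add: prufer_amp_def b_def g_def fun_eq_iff)
  ultimately show ?thesis by (auto intro!: exI derivative_eq_intros)
qed

lemma prufer_form_simple_zero:
  assumes "0 < d" "k1\<^sup>2 < x\<^sup>2" "x\<^sup>2 < k2\<^sup>2" "prufer_form k1 k2 d x = 0"
  obtains D where "D \<noteq> 0" "(prufer_form k1 k2 d has_real_derivative D) (at x)"
proof -
  define A where "A = prufer_amp k1 k2 d"
  define \<theta> where "\<theta> = prufer_angle k1 k2 d"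
  define \<theta>' where "\<theta>' = - x * (d + 1 / sqrt (x\<^sup>2 - k1\<^sup>2)) / sqrt (k2\<^sup>2 - x\<^sup>2)"
  have "0 < A x" using prufer_amp_pos[OF assms(2,3)] by (simp add: A_def)
  have "0 < d + 1 / sqrt (x\<^sup>2 - k1\<^sup>2)" "x \<noteq> 0"
    using assms by (auto intro!: add_pos_pos)
  then have "\<theta>' \<noteq> 0"
    using assms(3) by (simp add: \<theta>'_def)
  have "sin (2 * \<theta> x) = 0"
    using assms(4) \<open>0 < A x\<close> by (simp add: prufer_form_def A_def \<theta>_def)
  then have "cos (2 * \<theta> x) \<noteq> 0" by (auto dest: sin_zero_abs_cos_one)
  obtain A' where "(A has_real_derivative A') (at x)"
    using prufer_amp_differentiable[OF assms(2,3)] by (auto simp: A_def)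
  then have "((\<lambda>y. A y * sin (2 * \<theta> y)) has_real_derivative
      A' * sin (2 * \<theta> x) + A x * (cos (2 * \<theta> x) * (2 * \<theta>'))) (at x)"
    using has_real_derivative_prufer_angle[OF assms(2,3)]
    by (auto intro!: derivative_eq_intros simp: \<theta>_def \<theta>'_def)
  then have "(prufer_form k1 k2 d has_real_derivative A x * cos (2 * \<theta> x) * 2 * \<theta>') (at x)"
    using \<open>sin (2 * \<theta> x) = 0\<close> by (simp add: prufer_form_def[abs_def] A_def \<theta>_def algebra_simps)
  moreover have "A x * cos (2 * \<theta> x) * 2 * \<theta>' \<noteq> 0"
    using \<open>0 < A x\<close> \<open>cos (2 * \<theta> x) \<noteq> 0\<close> \<open>\<theta>' \<noteq> 0\<close> by simp
  ultimately show ?thesis using that by blast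
qed

lemma open_annulus: "open {y::real. k1\<^sup>2 < y\<^sup>2 \<and> y\<^sup>2 < k2\<^sup>2}"
  by (intro open_Collect_conj open_Collect_less continuous_intros)

lemma W0_simple_zero:
  assumes "0 < d" "k1\<^sup>2 < x\<^sup>2" "x\<^sup>2 < k2\<^sup>2" "W0 k1 k2 d x = 0"
  obtains D where "D \<noteq> 0" "(W0 k1 k2 d has_vector_derivative of_real D) (at x)"
    "\<forall>\<^sub>F y in at x. W0 k1 k2 d y \<noteq> 0"
proof -
  have W0_eq: "W0 k1 k2 d y = of_real (prufer_form k1 k2 d y)"
    if "y \<in> {y. k1\<^sup>2 < y\<^sup>2 \<and> y\<^sup>2 < k2\<^sup>2}" for y
    using that W0_prufer[OF assms(1)] by simp
  then have "prufer_form k1 k2 d x = 0" using assms by simp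
  then obtain D where D: "D \<noteq> 0" "(prufer_form k1 k2 d has_real_derivative D) (at x)"
    using prufer_form_simple_zero[OF assms(1-3)] by blast
  have "(W0 k1 k2 d has_vector_derivative of_real D) (at x)"
    by (rule has_vector_derivative_transform_within_open[OF has_vector_derivative_of_real[OF D(2)]
          open_annulus]) (use assms W0_eq in auto)
  moreover have "\<forall>\<^sub>F y in at x. W0 k1 k2 d y \<noteq> 0"
  proof -
    have "\<forall>\<^sub>F y in at x. (prufer_form k1 k2 d y - prufer_form k1 k2 d x) / (y - x) \<noteq> 0"
      using D(2,1) unfolding has_field_derivative_iff by (rule tendsto_imp_eventually_ne)
    moreover have "\<forall>\<^sub>F y in at x. y \<in> {y. k1\<^sup>2 < y\<^sup>2 \<and> y\<^sup>2 < k2\<^sup>2}"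
      using assms by (intro eventually_at_in_open'[OF open_annulus]) auto
    ultimately show ?thesis
      by eventually_elim (use W0_eq \<open>prufer_form k1 k2 d x = 0\<close> in auto)
  qed
  ultimately show ?thesis using that D(1) by blast
qed

lemma finite_isolated_zeros:
  fixes f :: "real \<Rightarrow> 'a::real_normed_vector"
  assumes "continuous_on UNIV f" "{x. f x = 0} \<subseteq> {a..b}"
    and "\<And>x. f x = 0 \<Longrightarrow> \<forall>\<^sub>F y in at x. f y \<noteq> 0"
  shows "finite {x. f x = 0}"
proof -
  have "\<not> z islimpt {x. f x = 0}" for z
  proof (cases "f z = 0")
    case False
    have "(f \<longlongrightarrow> f z) (at z)"
      using assms(1) by (simp add: continuous_on_def)
    then have "\<forall>\<^sub>F y in at z. f y \<noteq> 0" using False by (rule tendsto_imp_eventually_ne)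
    then show ?thesis by (simp add: islimpt_iff_eventually)
  qed (use assms(3) in \<open>simp add: islimpt_iff_eventually\<close>)
  then have "finite ({a..b} \<inter> {x. f x = 0})"
    by (intro finite_not_islimpt_in_compact) auto
  moreover have "{a..b} \<inter> {x. f x = 0} = {x. f x = 0}" using assms(2) by blast
  ultimately show ?thesis by simp
qed

lemma continuous_on_prufer_angle:
  assumes "0 < a" "b\<^sup>2 < k2\<^sup>2"
  shows "continuous_on {a..b} (prufer_angle k1 k2 d)"
proof -
  have "sqrt (k2\<^sup>2 - y\<^sup>2) \<noteq> 0" if "y \<in> {a..b}" for y
  proof -
    have "y\<^sup>2 \<le> b\<^sup>2" using that \<open>0 < a\<close> by (intro power_mono) auto
    with assms(2) show ?thesis by simp
  qed
  then show ?thesis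
    unfolding prufer_angle_def[abs_def] by (intro continuous_intros) blast
qed

lemma prufer_angle_nonpos_near_k2:
  assumes "0 < k1" "k1 < k2" "0 < d"
  obtains x0 where "k1 < x0" "x0\<^sup>2 < k2\<^sup>2" "prufer_angle k1 k2 d x0 \<le> 0"
proof -
  define V where "V = k2\<^sup>2 - k1\<^sup>2"
  have "0 < V" using assms by (simp add: V_def power_strict_mono)
  \<comment> \<open>Choose x0 with b = sqrt (k2^2 - x0^2) so small that b d \<le> pi/4 \<le> arctan (g/b).\<close>
  define \<beta> where "\<beta> = min (pi / (4 * d)) (sqrt (V / 2))"
  define x0 where "x0 = sqrt (k2\<^sup>2 - \<beta>\<^sup>2)"
  have "0 < \<beta>" using \<open>0 < V\<close> \<open>0 < d\<close> by (simp add: \<beta>_def)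
  have "\<beta>\<^sup>2 \<le> V / 2"
    using \<open>0 < V\<close> \<open>0 < \<beta>\<close> real_sqrt_le_iff[of "\<beta>\<^sup>2" "V / 2"] by (simp add: \<beta>_def)
  then have "k1\<^sup>2 + \<beta>\<^sup>2 < k2\<^sup>2" using \<open>0 < V\<close> by (simp add: V_def)
  moreover have "0 \<le> k1\<^sup>2" "0 < \<beta>\<^sup>2" using \<open>0 < \<beta>\<close> by simp_all
  ultimately have "0 \<le> k2\<^sup>2 - \<beta>\<^sup>2" by linarith
  then have "x0\<^sup>2 = k2\<^sup>2 - \<beta>\<^sup>2" "0 \<le> x0" unfolding x0_def by simp_all
  with \<open>k1\<^sup>2 + \<beta>\<^sup>2 < k2\<^sup>2\<close> \<open>0 < \<beta>\<^sup>2\<close>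
  have x0_sq: "x0\<^sup>2 = k2\<^sup>2 - \<beta>\<^sup>2" "k1\<^sup>2 < x0\<^sup>2" "x0\<^sup>2 < k2\<^sup>2"
    by linarith+
  have "\<beta> \<le> sqrt (x0\<^sup>2 - k1\<^sup>2)"
    using \<open>\<beta>\<^sup>2 \<le> V / 2\<close> \<open>0 < \<beta>\<close> by (intro real_le_rsqrt) (simp add: x0_sq(1) V_def)
  then have "pi / 4 \<le> arctan (sqrt (x0\<^sup>2 - k1\<^sup>2) / \<beta>)"
    using \<open>0 < \<beta>\<close> arctan_monotone'[of 1 "sqrt (x0\<^sup>2 - k1\<^sup>2) / \<beta>"] by (simp add: arctan_one)
  moreover have "\<beta> * d \<le> pi / 4"
    using \<open>0 < d\<close> by (simp add: \<beta>_def min_def field_simps split: if_splits)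
  ultimately have "prufer_angle k1 k2 d x0 \<le> 0"
    using \<open>0 < \<beta>\<close> by (simp add: prufer_angle_def x0_sq(1))
  moreover have "k1 < x0"
    by (rule power_less_imp_less_base[OF x0_sq(2) \<open>0 \<le> x0\<close>])
  ultimately show ?thesis using that x0_sq(3) by blast
qed

lemma W0_has_zero:
  assumes "0 < k1" "k1 < k2" "0 < d"
  obtains x where "k1\<^sup>2 < x\<^sup>2" "x\<^sup>2 < k2\<^sup>2" "W0 k1 k2 d x = 0"
proof -
  obtain x0 where x0: "k1 < x0" "x0\<^sup>2 < k2\<^sup>2" "prufer_angle k1 k2 d x0 \<le> 0"
    using prufer_angle_nonpos_near_k2[OF assms] .
  have angle_k1: "prufer_angle k1 k2 d k1 = sqrt (k2\<^sup>2 - k1\<^sup>2) * d"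
    by (simp add: prufer_angle_def)
  moreover have "0 < sqrt (k2\<^sup>2 - k1\<^sup>2) * d"
    using assms by (simp add: power_strict_mono)
  ultimately obtain x where x: "k1 \<le> x" "x \<le> x0" "prufer_angle k1 k2 d x = 0"
    using IVT2'[of "prufer_angle k1 k2 d" x0 0 k1] x0 continuous_on_prufer_angle[OF assms(1) x0(2)]
    by auto
  with angle_k1 \<open>0 < sqrt (k2\<^sup>2 - k1\<^sup>2) * d\<close> have "k1 < x" by (metis order_le_less less_irrefl)
  then have "k1\<^sup>2 < x\<^sup>2" using \<open>0 < k1\<close> by (intro power_strict_mono) auto
  have "x\<^sup>2 \<le> x0\<^sup>2" using x \<open>0 < k1\<close> by (intro power_mono) auto
  with x0(2) have "x\<^sup>2 < k2\<^sup>2" by linarith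
  with W0_prufer[OF \<open>0 < d\<close> \<open>k1\<^sup>2 < x\<^sup>2\<close>] x(3) show ?thesis
    by (intro that[OF \<open>k1\<^sup>2 < x\<^sup>2\<close>]) (simp_all add: prufer_form_def)
qed

lemma abs_between_if_sq_between:
  fixes k1 k2 xi :: real
  assumes "0 \<le> k1" "0 \<le> k2" "k1\<^sup>2 < xi\<^sup>2" "xi\<^sup>2 < k2\<^sup>2"
  shows "k1 < \<bar>xi\<bar>" "\<bar>xi\<bar> < k2"
proof -
  have "\<not> \<bar>xi\<bar> \<le> \<bar>k1\<bar>" "\<not> \<bar>k2\<bar> \<le> \<bar>xi\<bar>"
    using assms(3,4) by (simp_all add: abs_le_square_iff)
  then show "k1 < \<bar>xi\<bar>" "\<bar>xi\<bar> < k2" using assms(1,2) by simp_all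
qed

theorem theorem2:
  fixes k1 k2 d :: real
  assumes "0 < k1" and "k1 < k2" and "0 < d"
    and "\<forall>n::nat. n > 0 \<longrightarrow> 2 * d * sqrt (k2\<^sup>2 - k1\<^sup>2) \<noteq> real n * pi"
  shows "(\<forall>xi delta. delta > 0 \<longrightarrow> Wr k1 k2 d xi delta \<noteq> 0) \<and>
    (let Z = {xi. ((\<lambda>delta. Wr k1 k2 d xi delta) \<longlongrightarrow> 0) (at_right 0)} in
       finite Z \<and> Z \<noteq> {} \<and>
       (\<forall>xi\<in>Z. - xi \<in> Z \<and> k1 < \<bar>xi\<bar> \<and> \<bar>xi\<bar> < k2 \<and>
          (\<exists>D. D \<noteq> 0 \<and> (W0 k1 k2 d has_vector_derivative D) (at xi))))"
proof -
  have Z_eq: "{xi. ((\<lambda>delta. Wr k1 k2 d xi delta) \<longlongrightarrow> 0) (at_right 0)} = {xi. W0 k1 k2 d xi = 0}"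
    using Wr_tendsto_0_iff[OF \<open>0 < d\<close>] by blast
  note between = W0_zero_imp_between[OF assms]
  have bounds: "k1 < \<bar>xi\<bar>" "\<bar>xi\<bar> < k2" if "W0 k1 k2 d xi = 0" for xi
    using abs_between_if_sq_between[OF _ _ between[OF that]] assms(1,2) by simp_all
  have "finite {xi. W0 k1 k2 d xi = 0}"
  proof (rule finite_isolated_zeros[OF continuous_on_W0[OF \<open>0 < d\<close>]])
    show "{xi. W0 k1 k2 d xi = 0} \<subseteq> {-k2..k2}"
      using bounds(2) by (fastforce simp: abs_less_iff)
    show "\<forall>\<^sub>F y in at xi. W0 k1 k2 d y \<noteq> 0" if "W0 k1 k2 d xi = 0" for xi
      by (rule W0_simple_zero[OF \<open>0 < d\<close> between[OF that] that])
  qed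
  moreover have "{xi. W0 k1 k2 d xi = 0} \<noteq> {}"
    using W0_has_zero[OF assms(1-3)] by blast
  moreover have "\<exists>D. D \<noteq> 0 \<and> (W0 k1 k2 d has_vector_derivative D) (at xi)" if "W0 k1 k2 d xi = 0" for xi
    using W0_simple_zero[OF \<open>0 < d\<close> between[OF that] that] by (metis of_real_eq_0_iff)
  ultimately show ?thesis
    unfolding Let_def Z_eq using Wr_nonzero[OF \<open>0 < d\<close>] bounds W0_minus[OF \<open>0 < d\<close>] by auto
qed

end
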